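(* Assume the rearrangement setting described in the context, with $R$ a poset. Assume moreover that: - $\beta$ is a bijection $X\to Y$ which is a homomorphism from $R|_X$ to $R|_Y$; - for every $x\in X$, $N^{in}_R(x)\setminus M\subseteq N^{in}_R(\beta(x))$ and $N^{out}_R(x)\setminus M\subseteq N^{out}_R(\beta(x))$; - $X$ is convex in $R$; - there is no walk in $R$ from $M$ to $Y$ and no walk in $R$ from $Y$ to $M$. Let $T$ be the transitive hull of $S$. Then $T$ is a poset and $R\sqsubseteq_\Gamma T$ with respect to $\mathfrak{D}$.
   Context: **Digraphs and homomorphisms.** - A digraph $G$ is a pair $(V(G),A(G))$, where $V(G)$ is a finite non-empty set and $A(G)\subseteq V(G)\times V(G)$. Arcs are written $vw$. - A poset is a reflexive, antisymmetric, transitive digraph. - A homomorphism $\xi:G\to H$ is a map $V(G)\to V(H)$ with $\xi(v)\xi(w)\in A(H)$ for all $vw\in A(G)$. $\mathcal{H}(G,H)$ is the set of homomorphisms. - Two vertices $u,w$ are adjacent if $uw\in A(G)$ or $wu\in A(G)$. - $N_G(v)$ is the set of $w\ne v$ adjacent to $v$. $N^{in}_G(v)=\{w\in N_G(v):wv\in A(G)\}$ and $N^{out}_G(v)=\{w\in N_G(v):vw\in A(G)\}$. - $G|_X$ is the induced subdigraph on $X$. - A walk is a sequence $v_0,\dots,v_I$ with $I\ge1$ and $v_{i-1}v_i\in A(G)$. A walk from $A$ to $B$ is one with $v_0\in A$ and $v_I\in B$. - A set $X$ is convex if every walk starting and ending in $X$ has all its vertices in $X$. - The transitive hull of $G$ is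 the digraph on $V(G)$ whose arc set is the smallest transitive relation containing $A(G)$. - $\mathfrak{D}$ is the class of all digraphs. **Rearrangement setting.** - $R=(Z,A(R))$ is a digraph. - $X,M\subseteq Z$ are disjoint. - $Y\subseteq Z$ satisfies $M\cap Y=\emptyset$ and $M\cap N_R(y)=\emptyset$ for all $y\in Y$. - $\beta:X\to Y$ is a map. - $S$ is the digraph with $V(S)=Z$ and $A(S)=A_r\cup A_d\cup A_u$, where: - $A_r=A(R)\setminus((M\times X)\cup(X\times M))$; - $A_d=\{m\beta(x): mx\in A(R)\cap(M\times X)\}$; - $A_u=\{\beta(x)m: xm\in A(R)\cap(X\times M)\}$. **Connectivity and schemes.** - For $X'\subseteq V(G)$ and $v,w\in X'$, the vertices $v$ and $w$ are connected in $X'$ if $v=w$, or if there are $z_0=v,\dots,z_I=w$ in $X'$ with consecutive terms adjacent. - $\gamma_{X'}(v)$ is the set of such $w$. - $\Gamma_\xi(v)=\gamma_{\xi^{-1}(\xi(v))}(v)$. - $\mathfrak{D}_r$ is a fixed system of representatives of $\mathfrak{D}$ up to isomorphism. - $R\sqsubseteq_\Gamma T$ with respect to $\mathfrak{D}$ means there exist injective maps $\rho_G:\mathcal{H}(G,R)\to\mathcal{H}(G,T)$, $G\in\mathfrak{D}_r$, with $\Gamma_{\rho_G(\xi)}(v)=\Gamma_\xi(v)$ for all $G$, $\xi$ and $v$. *)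

theory Defs
  imports Main "HOL-Library.FuncSet"
begin

type_synonym 'a digraph = "'a set \<times> ('a \<times> 'a) set"

definition verts :: "'a digraph \<Rightarrow> 'a set" where "verts G = fst G"
definition arcs :: "'a digraph \<Rightarrow> ('a \<times> 'a) set" where "arcs G = snd G"

definition is_digraph :: "'a digraph \<Rightarrow> bool" where
  "is_digraph G \<longleftrightarrow> finite (verts G) \<and> verts G \<noteq> {} \<and> arcs G \<subseteq> verts G \<times> verts G"

definition is_poset :: "'a digraph \<Rightarrow> bool" where
  "is_poset G \<longleftrightarrow> is_digraph G \<and> refl_on (verts G) (arcs G) \<and> antisym (arcs G) \<and> trans (arcs G)"

definition homs :: "'a digraph \<Rightarrow> 'b digraph \<Rightarrow> ('a \<Rightarrow> 'b) set" where
  "homs G H = {\<xi> \<in> verts G \<rightarrow>\<^sub>E verts H. \<forall>(v, w) \<in> arcs G. (\<xi> v, \<xi> w) \<in> arcs H}"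

definition induced :: "'a digraph \<Rightarrow> 'a set \<Rightarrow> 'a digraph" where
  "induced G X = (X, arcs G \<inter> (X \<times> X))"

definition nbrs :: "'a digraph \<Rightarrow> 'a \<Rightarrow> 'a set" where
  "nbrs G v = {w \<in> verts G. w \<noteq> v \<and> ((v, w) \<in> arcs G \<or> (w, v) \<in> arcs G)}"

definition nbrs_in :: "'a digraph \<Rightarrow> 'a \<Rightarrow> 'a set" where
  "nbrs_in G v = {w \<in> nbrs G v. (w, v) \<in> arcs G}"

definition nbrs_out :: "'a digraph \<Rightarrow> 'a \<Rightarrow> 'a set" where
  "nbrs_out G v = {w \<in> nbrs G v. (v, w) \<in> arcs G}"

definition is_walk :: "'a digraph \<Rightarrow> 'a list \<Rightarrow> bool" where
  "is_walk G p \<longleftrightarrow> length p \<ge> 2 \<and> (\<forall>i. Suc i < length p \<longrightarrow> (p ! i, p ! Suc i) \<in> arcs G)"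

definition walk_from_to :: "'a digraph \<Rightarrow> 'a set \<Rightarrow> 'a set \<Rightarrow> 'a list \<Rightarrow> bool" where
  "walk_from_to G A B p \<longleftrightarrow> is_walk G p \<and> hd p \<in> A \<and> last p \<in> B"

definition convex :: "'a digraph \<Rightarrow> 'a set \<Rightarrow> bool" where
  "convex G X \<longleftrightarrow> (\<forall>p. walk_from_to G X X p \<longrightarrow> set p \<subseteq> X)"

definition transitive_hull :: "'a digraph \<Rightarrow> 'a digraph" where
  "transitive_hull G = (verts G, (arcs G)\<^sup>+)"

definition rearr :: "'a digraph \<Rightarrow> 'a set \<Rightarrow> 'a set \<Rightarrow> ('a \<Rightarrow> 'a) \<Rightarrow> 'a digraph" where
  "rearr R X M \<beta> = (verts R,
      (arcs R - ((M \<times> X) \<union> (X \<times> M)))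
    \<union> {(m, \<beta> x) | m x. (m, x) \<in> arcs R \<inter> (M \<times> X)}
    \<union> {(\<beta> x, m) | x m. (x, m) \<in> arcs R \<inter> (X \<times> M)})"

definition conn_comp :: "'a digraph \<Rightarrow> 'a set \<Rightarrow> 'a \<Rightarrow> 'a set" where
  "conn_comp G X' v = {w \<in> X'. v \<in> X' \<and>
     (v, w) \<in> {(a, b). a \<in> X' \<and> b \<in> X' \<and> ((a, b) \<in> arcs G \<or> (b, a) \<in> arcs G)}\<^sup>*}"

definition Gamma :: "'a digraph \<Rightarrow> ('a \<Rightarrow> 'b) \<Rightarrow> 'a \<Rightarrow> 'a set" where
  "Gamma G \<xi> v = conn_comp G {u \<in> verts G. \<xi> u = \<xi> v} v"

text \<open>Every finite digraph is isomorphic to one with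
  vertices in nat, so digraphs on nat contain a system of representatives; the existence of
  the family (\<rho>_G) is equivalent (by choice and isomorphism invariance) to existence of each
  \<rho>_G separately.\<close>
definition gamma_below :: "'a digraph \<Rightarrow> 'a digraph \<Rightarrow> bool" where
  "gamma_below R T \<longleftrightarrow> (\<forall>G :: nat digraph. is_digraph G \<longrightarrow>
     (\<exists>\<rho>. \<rho> \<in> homs G R \<rightarrow> homs G T \<and> inj_on \<rho> (homs G R) \<and>
          (\<forall>\<xi> \<in> homs G R. \<forall>v \<in> verts G. Gamma G (\<rho> \<xi>) v = Gamma G \<xi> v)))"

end

theory Submission
  imports Defs
begin

text \<open>
  The arcs of the transitive hull T of S admit an explicit description in R: b lies above a in T iff
  a \<le> b in R, or a climbs into some m \<in> M, descends to x \<in> X and continues above \<beta> x, possibly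
  followed by a passage from some \<beta> x' through x' \<le> m' \<in> M up to b. Since no walk of R joins
  M and Y and \<beta> is an injective homomorphism, two such descriptions of opposite direction would
  force x \<le> m \<le> x for some x \<in> X and m \<in> M, so T is antisymmetric.

  For a homomorphism \<xi> from G to R, let D(\<xi>) be the set of vertices mapped into X whose
  \<xi>-component is adjacent to a vertex mapped into M, and let \<rho>(\<xi>) be \<beta> \<circ> \<xi> on D(\<xi>) and \<xi>
  elsewhere. The neighbourhood conditions make \<rho>(\<xi>) a homomorphism into S which identifies
  the ends of an arc exactly when \<xi> does, so the components \<Gamma> are unchanged. Since a
  component mapped into Y is never adjacent to one mapped into M, D(\<xi>) is recovered from
  \<rho>(\<xi>) as the set of vertices mapped into Y whose component touches M, and \<rho> is injective.
\<close>

abbreviation adjacent :: "'a digraph \<Rightarrow> 'a \<Rightarrow> 'a \<Rightarrow> bool" where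
  "adjacent G v w \<equiv> (v, w) \<in> arcs G \<or> (w, v) \<in> arcs G"

lemma verts_rearr [simp]: "verts (rearr R X M \<beta>) = verts R"
  by (simp add: rearr_def verts_def)

lemma verts_transitive_hull [simp]: "verts (transitive_hull G) = verts G"
  by (simp add: transitive_hull_def verts_def)

lemma arcs_transitive_hull [simp]: "arcs (transitive_hull G) = (arcs G)\<^sup>+"
  by (simp add: transitive_hull_def arcs_def)

lemma arcs_rearr_iff:
  "(a, b) \<in> arcs (rearr R X M \<beta>) \<longleftrightarrow>
     (a, b) \<in> arcs R \<and> \<not> (a \<in> M \<and> b \<in> X) \<and> \<not> (a \<in> X \<and> b \<in> M)
   \<or> (\<exists>x\<in>X. a \<in> M \<and> b = \<beta> x \<and> (a, x) \<in> arcs R)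
   \<or> (\<exists>x\<in>X. b \<in> M \<and> a = \<beta> x \<and> (x, b) \<in> arcs R)"
  by (auto simp: rearr_def arcs_def)

lemma walk_from_to_arc: "(a, b) \<in> arcs G \<Longrightarrow> a \<in> A \<Longrightarrow> b \<in> B \<Longrightarrow> walk_from_to G A B [a, b]"
  by (auto simp: walk_from_to_def is_walk_def less_Suc_eq)

lemma is_digraph_arcD: "is_digraph G \<Longrightarrow> (v, w) \<in> arcs G \<Longrightarrow> v \<in> verts G \<and> w \<in> verts G"
  by (auto simp: is_digraph_def)

lemma mem_Gamma_iff:
  "w \<in> Gamma G f v \<longleftrightarrow> v \<in> verts G \<and> w \<in> verts G \<and> f w = f v \<and>
     (v, w) \<in> {(a, b). a \<in> verts G \<and> f a = f v \<and> b \<in> verts G \<and> f b = f v \<and> adjacent G a b}\<^sup>*"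
  by (auto simp: Gamma_def conn_comp_def)

lemma Gamma_self: "v \<in> verts G \<Longrightarrow> v \<in> Gamma G f v"
  by (simp add: mem_Gamma_iff)

lemma Gamma_same_value: "u \<in> Gamma G f v \<Longrightarrow> f u = f v"
  by (simp add: mem_Gamma_iff)

lemma Gamma_adjacent:
  assumes "is_digraph G" "adjacent G v w" "f v = f w" "u \<in> Gamma G f w"
  shows "u \<in> Gamma G f v"
proof -
  let ?E = "{(a, b). a \<in> verts G \<and> f a = f v \<and> b \<in> verts G \<and> f b = f v \<and> adjacent G a b}"
  have vw: "v \<in> verts G" "w \<in> verts G"
    using assms(2) is_digraph_arcD[OF assms(1)] by blast+
  have "(w, u) \<in> ?E\<^sup>*"
    using assms(3,4) by (simp add: mem_Gamma_iff)
  moreover have "(v, w) \<in> ?E"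
    using assms(2,3) vw by auto
  ultimately have "(v, u) \<in> ?E\<^sup>*"
    by (rule converse_rtrancl_into_rtrancl[rotated])
  with assms(3,4) vw show ?thesis
    by (simp add: mem_Gamma_iff)
qed

lemma Gamma_cong:
  assumes "\<And>a b. (a, b) \<in> arcs G \<Longrightarrow> f a = f b \<longleftrightarrow> g a = g b"
  shows "Gamma G f v = Gamma G g v"
proof -
  have Gamma_mono: "Gamma G f v \<subseteq> Gamma G g v"
    if same_kernel: "\<And>a b. (a, b) \<in> arcs G \<Longrightarrow> f a = f b \<Longrightarrow> g a = g b" for f g
  proof
    fix w
    assume w: "w \<in> Gamma G f v"
    let ?E = "\<lambda>f. {(a, b). a \<in> verts G \<and> f a = f v \<and> b \<in> verts G \<and> f b = f v \<and> adjacent G a b}"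
    have "(v, w) \<in> (?E f)\<^sup>*"
      using w by (simp add: mem_Gamma_iff)
    then have "(v, w) \<in> (?E g)\<^sup>* \<and> g w = g v"
    proof (induction rule: rtrancl_induct)
      case (step y z)
      then have "g y = g z"
        using same_kernel by fastforce
      with step show ?case
        by (auto intro: rtrancl_into_rtrancl)
    qed simp
    with w show "w \<in> Gamma G g v"
      by (simp add: mem_Gamma_iff)
  qed
  show ?thesis
    using Gamma_mono[of f g] Gamma_mono[of g f] assms by blast
qed

text \<open>The set D(\<xi>) of the construction is \<open>touching G \<xi> X M\<close>.\<close>

definition touching :: "'b digraph \<Rightarrow> ('b \<Rightarrow> 'a) \<Rightarrow> 'a set \<Rightarrow> 'a set \<Rightarrow> 'b set" where
  "touching G \<xi> Z M = {v \<in> verts G. \<xi> v \<in> Z \<and>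
     (\<exists>u\<in>Gamma G \<xi> v. \<exists>k\<in>verts G. \<xi> k \<in> M \<and> adjacent G u k)}"

lemma touching_verts: "v \<in> touching G \<xi> Z M \<Longrightarrow> v \<in> verts G"
  by (simp add: touching_def)

lemma touching_image: "v \<in> touching G \<xi> Z M \<Longrightarrow> \<xi> v \<in> Z"
  by (simp add: touching_def)

lemma touching_adjacent:
  assumes "is_digraph G" "adjacent G v w" "\<xi> w = \<xi> v" "v \<in> touching G \<xi> Z M"
  shows "w \<in> touching G \<xi> Z M"
proof -
  obtain u k where "u \<in> Gamma G \<xi> v" "k \<in> verts G" "\<xi> k \<in> M" "adjacent G u k"
    using assms(4) by (auto simp: touching_def)
  moreover have "u \<in> Gamma G \<xi> w"
    using Gamma_adjacent[OF assms(1), of w v \<xi> u] assms(2,3) \<open>u \<in> Gamma G \<xi> v\<close> by auto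
  moreover have "w \<in> verts G"
    using assms(2) is_digraph_arcD[OF assms(1)] by blast
  ultimately show ?thesis
    using assms(3,4) by (auto simp: touching_def)
qed

lemma touching_adjacent_to:
  assumes "is_digraph G" "adjacent G v w" "\<xi> v \<in> M" "\<xi> w \<in> Z"
  shows "w \<in> touching G \<xi> Z M"
  using assms is_digraph_arcD[OF assms(1)] Gamma_self[of w G \<xi>]
  unfolding touching_def by blast

locale rearrangement =
  fixes R :: "'a digraph" and X M Y :: "'a set" and \<beta> :: "'a \<Rightarrow> 'a"
  assumes poset: "is_poset R"
    and X_M_disjoint: "X \<inter> M = {}" and Y_verts: "Y \<subseteq> verts R" and M_Y_disjoint: "M \<inter> Y = {}"
    and bij: "bij_betw \<beta> X Y"
    and hom: "\<forall>x1 \<in> X. \<forall>x2 \<in> X. (x1, x2) \<in> arcs (induced R X) \<longrightarrow> (\<beta> x1, \<beta> x2) \<in> arcs (induced R Y)"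
    and nbrs_in_sub: "\<forall>x \<in> X. nbrs_in R x - M \<subseteq> nbrs_in R (\<beta> x)"
    and nbrs_out_sub: "\<forall>x \<in> X. nbrs_out R x - M \<subseteq> nbrs_out R (\<beta> x)"
    and no_walk_M_Y: "\<not> (\<exists>p. walk_from_to R M Y p)"
    and no_walk_Y_M: "\<not> (\<exists>p. walk_from_to R Y M p)"
begin

abbreviation le_R :: "'a \<Rightarrow> 'a \<Rightarrow> bool" (infix "\<preceq>" 50) where
  "a \<preceq> b \<equiv> (a, b) \<in> arcs R"

abbreviation S :: "'a digraph" where
  "S \<equiv> rearr R X M \<beta>"

abbreviation T :: "'a digraph" where
  "T \<equiv> transitive_hull S"

lemma R_verts: "a \<preceq> b \<Longrightarrow> a \<in> verts R \<and> b \<in> verts R"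
  using poset by (auto simp: is_poset_def is_digraph_def)

lemma R_refl: "a \<in> verts R \<Longrightarrow> a \<preceq> a"
  using poset by (auto simp: is_poset_def refl_on_def)

lemma R_trans: "a \<preceq> b \<Longrightarrow> b \<preceq> c \<Longrightarrow> a \<preceq> c"
  using poset by (auto simp: is_poset_def dest: transD)

lemma R_antisym: "a \<preceq> b \<Longrightarrow> b \<preceq> a \<Longrightarrow> a = b"
  using poset by (auto simp: is_poset_def dest: antisymD)

lemma not_M_le_Y: "m \<in> M \<Longrightarrow> y \<in> Y \<Longrightarrow> \<not> m \<preceq> y"
  using no_walk_M_Y walk_from_to_arc[of m y R M Y] by blast

lemma not_Y_le_M: "y \<in> Y \<Longrightarrow> m \<in> M \<Longrightarrow> \<not> y \<preceq> m"
  using no_walk_Y_M walk_from_to_arc[of y m R Y M] by blast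

lemma beta_Y: "x \<in> X \<Longrightarrow> \<beta> x \<in> Y"
  using bij by (auto simp: bij_betw_def)

lemma beta_not_M: "x \<in> X \<Longrightarrow> \<beta> x \<notin> M"
  using beta_Y M_Y_disjoint by auto

lemma beta_inj: "x \<in> X \<Longrightarrow> x' \<in> X \<Longrightarrow> \<beta> x = \<beta> x' \<Longrightarrow> x = x'"
  using bij by (auto simp: bij_betw_def inj_on_def)

lemma beta_mono: "x \<in> X \<Longrightarrow> x' \<in> X \<Longrightarrow> x \<preceq> x' \<Longrightarrow> \<beta> x \<preceq> \<beta> x'"
  using hom by (auto simp: induced_def arcs_def)

lemma beta_le_out: "x \<in> X \<Longrightarrow> x \<preceq> z \<Longrightarrow> z \<notin> M \<Longrightarrow> z \<noteq> x \<Longrightarrow> \<beta> x \<preceq> z \<and> z \<noteq> \<beta> x"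
  using nbrs_out_sub R_verts[of x z] by (fastforce simp: nbrs_out_def nbrs_def)

lemma le_beta_in: "x \<in> X \<Longrightarrow> z \<preceq> x \<Longrightarrow> z \<notin> M \<Longrightarrow> z \<noteq> x \<Longrightarrow> z \<preceq> \<beta> x \<and> z \<noteq> \<beta> x"
  using nbrs_in_sub R_verts[of z x] by (fastforce simp: nbrs_in_def nbrs_def)

lemma beta_fixes_comparable: "x \<in> X \<Longrightarrow> x \<preceq> \<beta> x \<or> \<beta> x \<preceq> x \<Longrightarrow> \<beta> x = x"
  using beta_le_out[of x "\<beta> x"] le_beta_in[of x "\<beta> x"] beta_not_M by auto

lemma M_between_X_beta_antitone:
  assumes "x \<in> X" "x' \<in> X" "m \<in> M" "x \<preceq> m" "m \<preceq> x'" "\<beta> x' \<preceq> \<beta> x"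
  shows False
proof -
  have "\<beta> x \<preceq> \<beta> x'"
    using assms(1,2,4,5) by (blast intro: beta_mono R_trans)
  then have "\<beta> x = \<beta> x'"
    using assms(6) by (rule R_antisym)
  then have "x' = x"
    using assms(1,2) beta_inj by simp
  then have "m = x"
    using assms(4,5) by (simp add: R_antisym)
  then show False
    using assms(1,3) X_M_disjoint by blast
qed

subsection \<open>The transitive hull of S is a poset\<close>

text \<open>
  \<open>reach_down a b\<close> covers the S-paths from a to b that use no arc of the form \<beta> x \<rightarrow> m, and
  \<open>reach\<close> covers all S-paths: once an arc \<beta> x \<rightarrow> m is used, no arc m' \<rightarrow> \<beta> x' can follow,
  because no element of M lies below an element of Y.
\<close>

definition reach_down :: "'a \<Rightarrow> 'a \<Rightarrow> bool" where
  "reach_down a b \<longleftrightarrow> a \<preceq> b \<or> (\<exists>x\<in>X. \<exists>m\<in>M. a \<preceq> m \<and> m \<preceq> x \<and> \<beta> x \<preceq> b)"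

definition reach :: "'a \<Rightarrow> 'a \<Rightarrow> bool" where
  "reach a b \<longleftrightarrow> reach_down a b \<or> (\<exists>x\<in>X. \<exists>m\<in>M. reach_down a (\<beta> x) \<and> x \<preceq> m \<and> m \<preceq> b)"

lemma reach_down_le_trans: "reach_down a b \<Longrightarrow> b \<preceq> c \<Longrightarrow> reach_down a c"
  unfolding reach_down_def using R_trans by blast

lemma reach_le_trans: "reach a b \<Longrightarrow> b \<preceq> c \<Longrightarrow> reach a c"
  unfolding reach_def using reach_down_le_trans R_trans by blast

lemma reach_down_le_M: "reach_down a b \<Longrightarrow> b \<preceq> m \<Longrightarrow> m \<in> M \<Longrightarrow> \<exists>m'\<in>M. a \<preceq> m'"
  unfolding reach_down_def using R_trans by blast

lemma reach_down_M: "reach_down a m \<Longrightarrow> m \<in> M \<Longrightarrow> a \<preceq> m"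
  unfolding reach_down_def using R_trans beta_Y not_Y_le_M by blast

lemma reach_down_trans: "reach_down a b \<Longrightarrow> reach_down b c \<Longrightarrow> reach_down a c"
  unfolding reach_down_def using R_trans beta_Y not_Y_le_M by blast

lemma reach_down_antisym: "reach_down a b \<Longrightarrow> reach_down b a \<Longrightarrow> a = b"
  using reach_down_le_M[of b a] reach_down_le_M[of a b] R_antisym R_trans beta_Y not_Y_le_M
  unfolding reach_down_def by metis

lemma reach_down_after_up:
  assumes "x \<in> X" "x' \<in> X" "m \<in> M" "x \<preceq> m" "m \<preceq> a" "reach_down a (\<beta> x')"
  shows "\<beta> x \<preceq> \<beta> x'"
  using assms beta_Y not_M_le_Y R_trans beta_mono unfolding reach_down_def by meson

lemma not_reach_down_after_up:
  assumes "x \<in> X" "m \<in> M" "x \<preceq> m" "m \<preceq> a" "reach_down a (\<beta> x)"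
  shows False
  using assms beta_Y not_M_le_Y R_trans M_between_X_beta_antitone unfolding reach_down_def by meson

lemma reach_antisym:
  assumes ab: "reach a b" and ba: "reach b a"
  shows "a = b"
proof -
  have down_up: False
    if "reach_down a b" "reach_down b (\<beta> x)" "x \<in> X" "m \<in> M" "x \<preceq> m" "m \<preceq> a" for a b x m
    using that reach_down_trans not_reach_down_after_up by blast
  have up_up: False
    if "reach_down a (\<beta> x)" "x \<in> X" "m \<in> M" "x \<preceq> m" "m \<preceq> b"
       "reach_down b (\<beta> x')" "x' \<in> X" "m' \<in> M" "x' \<preceq> m'" "m' \<preceq> a" for x m x' m'
    using that reach_down_after_up[of x' x m' a] reach_down_le_trans not_reach_down_after_up by blast
  show ?thesis
    using ab ba reach_down_antisym down_up up_up unfolding reach_def by metis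
qed

lemma reach_arc_S: "reach a b \<Longrightarrow> (b, c) \<in> arcs S \<Longrightarrow> reach a c"
  unfolding arcs_rearr_iff
proof (elim disjE conjE bexE)
  show "reach a c" if "reach a b" "b \<preceq> c"
    using that reach_le_trans by blast
next
  fix x
  assume "reach a b" "x \<in> X" "b \<in> M" "c = \<beta> x" "b \<preceq> x"
  then have "reach_down a (\<beta> x)"
    using reach_down_M beta_mono R_trans reach_down_le_trans R_verts R_refl
    unfolding reach_def reach_down_def by meson
  then show "reach a c"
    by (simp add: reach_def \<open>c = \<beta> x\<close>)
next
  fix x
  assume "reach a b" "x \<in> X" "c \<in> M" "b = \<beta> x" "x \<preceq> c"
  then show "reach a c"
    using R_refl R_verts R_trans beta_Y not_M_le_Y unfolding reach_def by meson
qed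

lemma arcs_S_verts: "(a, b) \<in> arcs S \<Longrightarrow> a \<in> verts R \<and> b \<in> verts R"
  unfolding arcs_rearr_iff using R_verts beta_Y Y_verts by blast

lemma trancl_S_reach: "(a, b) \<in> (arcs S)\<^sup>+ \<Longrightarrow> reach a b"
proof (induction rule: trancl_induct)
  case (base b)
  then have "reach a a"
    using arcs_S_verts R_refl by (simp add: reach_def reach_down_def)
  from this base show ?case
    by (rule reach_arc_S)
next
  case (step b c)
  from step.IH step.hyps(2) show ?case
    by (rule reach_arc_S)
qed

lemma is_poset_T: "is_poset T"
proof -
  have "is_digraph R"
    using poset by (simp add: is_poset_def)
  moreover have "arcs S \<subseteq> verts R \<times> verts R"
    using arcs_S_verts by auto
  then have "(arcs S)\<^sup>+ \<subseteq> verts R \<times> verts R"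
    by (rule trancl_subset_Sigma)
  moreover have "(a, a) \<in> arcs S" if "a \<in> verts R" for a
    using that R_refl X_M_disjoint by (auto simp: arcs_rearr_iff)
  ultimately show ?thesis
    using trancl_S_reach reach_antisym
    by (auto simp: is_poset_def is_digraph_def refl_on_def antisym_def trans_trancl)
qed

subsection \<open>An injective, component-preserving map of homomorphisms\<close>

definition rho :: "'b digraph \<Rightarrow> ('b \<Rightarrow> 'a) \<Rightarrow> 'b \<Rightarrow> 'a" where
  "rho G \<xi> v = (if v \<in> touching G \<xi> X M then \<beta> (\<xi> v) else \<xi> v)"

context
  fixes G :: "'b digraph" and \<xi> :: "'b \<Rightarrow> 'a"
  assumes G: "is_digraph G" and \<xi>: "\<xi> \<in> homs G R"
begin

lemma hom_arc: "(v, w) \<in> arcs G \<Longrightarrow> \<xi> v \<preceq> \<xi> w"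
  using \<xi> by (auto simp: homs_def)

lemma rho_arc:
  assumes vw: "(v, w) \<in> arcs G"
  shows "(rho G \<xi> v, rho G \<xi> w) \<in> arcs S"
proof -
  let ?D = "touching G \<xi> X M"
  have le: "\<xi> v \<preceq> \<xi> w"
    using hom_arc vw .
  consider "v \<in> ?D" "w \<in> ?D" | "v \<in> ?D" "w \<notin> ?D" | "v \<notin> ?D" "w \<in> ?D" | "v \<notin> ?D" "w \<notin> ?D"
    by blast
  then show ?thesis
  proof cases
    case 1
    then have "\<xi> v \<in> X" "\<xi> w \<in> X"
      by (auto dest: touching_image)
    with 1 le show ?thesis
      by (simp add: rho_def arcs_rearr_iff beta_mono beta_not_M)
  next
    case 2
    then have "\<xi> v \<in> X"
      by (auto dest: touching_image)
    moreover have "\<xi> w \<noteq> \<xi> v"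
      using touching_adjacent[OF G, of v w \<xi> X M] vw 2 by auto
    ultimately show ?thesis
      using 2 le beta_le_out[of "\<xi> v" "\<xi> w"] beta_not_M[of "\<xi> v"]
      by (auto simp: rho_def arcs_rearr_iff)
  next
    case 3
    then have "\<xi> w \<in> X"
      by (auto dest: touching_image)
    moreover have "\<xi> v \<noteq> \<xi> w"
      using touching_adjacent[OF G, of w v \<xi> X M] vw 3 by auto
    ultimately show ?thesis
      using 3 le le_beta_in[of "\<xi> w" "\<xi> v"] beta_not_M[of "\<xi> w"]
      by (auto simp: rho_def arcs_rearr_iff)
  next
    case 4
    have "\<not> (\<xi> v \<in> M \<and> \<xi> w \<in> X)"
      using touching_adjacent_to[OF G, of v w \<xi> M X] vw 4 by auto
    moreover have "\<not> (\<xi> v \<in> X \<and> \<xi> w \<in> M)"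
      using touching_adjacent_to[OF G, of w v \<xi> M X] vw 4 by auto
    ultimately show ?thesis
      using 4 le by (simp add: rho_def arcs_rearr_iff)
  qed
qed

lemma rho_hom: "rho G \<xi> \<in> homs G T"
  unfolding homs_def
proof (intro CollectI conjI PiE_I ballI)
  fix v
  assume "v \<in> verts G"
  then have "\<xi> v \<in> verts R"
    using \<xi> by (auto simp: homs_def)
  then show "rho G \<xi> v \<in> verts T"
    using touching_image[of v G \<xi> X M] beta_Y Y_verts by (auto simp: rho_def)
next
  fix v
  assume "v \<notin> verts G"
  then show "rho G \<xi> v = undefined"
    using \<xi> touching_verts[of v G \<xi> X M] by (auto simp: homs_def rho_def)
next
  fix e
  assume "e \<in> arcs G"
  then show "case e of (v, w) \<Rightarrow> (rho G \<xi> v, rho G \<xi> w) \<in> arcs T"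
    using rho_arc by auto
qed

lemma rho_eq_iff_on_arc:
  assumes vw: "(v, w) \<in> arcs G"
  shows "rho G \<xi> v = rho G \<xi> w \<longleftrightarrow> \<xi> v = \<xi> w"
proof -
  let ?D = "touching G \<xi> X M"
  have boundary: "rho G \<xi> a \<noteq> rho G \<xi> b \<and> \<xi> a \<noteq> \<xi> b"
    if ab: "adjacent G a b" "a \<in> ?D" "b \<notin> ?D" for a b
  proof -
    have ne: "\<xi> a \<noteq> \<xi> b"
      using touching_adjacent[OF G, of a b \<xi> X M] ab by auto
    have "\<xi> a \<in> X"
      using ab(2) by (rule touching_image)
    then have "\<beta> (\<xi> a) \<noteq> \<xi> b"
      using beta_fixes_comparable[of "\<xi> a"] ab(1) hom_arc ne by metis
    with ab ne show ?thesis
      by (simp add: rho_def)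
  qed
  show ?thesis
  proof (cases "v \<in> ?D"; cases "w \<in> ?D")
    assume "v \<in> ?D" "w \<in> ?D"
    moreover have "\<xi> v \<in> X \<Longrightarrow> \<xi> w \<in> X \<Longrightarrow> \<beta> (\<xi> v) = \<beta> (\<xi> w) \<Longrightarrow> \<xi> v = \<xi> w"
      by (rule beta_inj)
    ultimately show ?thesis
      by (auto simp: rho_def dest: touching_image)
  next
    assume "v \<in> ?D" "w \<notin> ?D"
    then show ?thesis
      using boundary[of v w] vw by blast
  next
    assume "v \<notin> ?D" "w \<in> ?D"
    then show ?thesis
      using boundary[of w v] vw by metis
  next
    assume "v \<notin> ?D" "w \<notin> ?D"
    then show ?thesis
      by (simp add: rho_def)
  qed
qed

lemma Gamma_rho: "Gamma G (rho G \<xi>) v = Gamma G \<xi> v"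
  by (rule Gamma_cong) (rule rho_eq_iff_on_arc)

lemma touching_rho: "touching G (rho G \<xi>) Y M = touching G \<xi> X M"
proof -
  have rho_M_iff: "rho G \<xi> k \<in> M \<longleftrightarrow> \<xi> k \<in> M" for k
    using touching_image[of k G \<xi> X M] beta_not_M X_M_disjoint by (auto simp: rho_def)
  show ?thesis
  proof (intro set_eqI iffI)
    fix v
    assume "v \<in> touching G (rho G \<xi>) Y M"
    then obtain u k where v: "v \<in> verts G" "rho G \<xi> v \<in> Y"
      and u: "u \<in> Gamma G \<xi> v" "k \<in> verts G" "\<xi> k \<in> M" "adjacent G u k"
      by (auto simp: touching_def Gamma_rho rho_M_iff)
    show "v \<in> touching G \<xi> X M"
    proof (rule ccontr)
      assume "v \<notin> touching G \<xi> X M"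
      then have "\<xi> u \<in> Y"
        using v(2) Gamma_same_value[OF u(1)] by (simp add: rho_def)
      then show False
        using u(3,4) hom_arc not_M_le_Y not_Y_le_M by blast
    qed
  next
    fix v
    assume v: "v \<in> touching G \<xi> X M"
    then have "rho G \<xi> v \<in> Y"
      using beta_Y touching_image[OF v] by (simp add: rho_def)
    with v show "v \<in> touching G (rho G \<xi>) Y M"
      by (auto simp: touching_def Gamma_rho rho_M_iff)
  qed
qed

end

lemma rho_inj:
  assumes G: "is_digraph G"
  shows "inj_on (rho G) (homs G R)"
proof (rule inj_onI)
  fix \<xi>1 \<xi>2
  assume \<xi>1: "\<xi>1 \<in> homs G R" and \<xi>2: "\<xi>2 \<in> homs G R" and eq: "rho G \<xi>1 = rho G \<xi>2"
  have D: "touching G \<xi>1 X M = touching G \<xi>2 X M"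
    using touching_rho[OF G \<xi>1] touching_rho[OF G \<xi>2] eq by simp
  show "\<xi>1 = \<xi>2"
  proof
    fix v
    have eq_v: "rho G \<xi>1 v = rho G \<xi>2 v"
      using eq by simp
    show "\<xi>1 v = \<xi>2 v"
    proof (cases "v \<in> touching G \<xi>1 X M")
      case True
      then have "\<xi>1 v \<in> X" "\<xi>2 v \<in> X" "\<beta> (\<xi>1 v) = \<beta> (\<xi>2 v)"
        using D eq_v by (auto simp: rho_def dest: touching_image)
      then show ?thesis
        by (rule beta_inj)
    next
      case False
      then show ?thesis
        using D eq_v by (simp add: rho_def)
    qed
  qed
qed

lemma gamma_below_T: "gamma_below R T"
  unfolding gamma_below_def
proof (intro allI impI)
  fix G :: "nat digraph"
  assume G: "is_digraph G"
  show "\<exists>\<rho>. \<rho> \<in> homs G R \<rightarrow> homs G T \<and> inj_on \<rho> (homs G R) \<and>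
          (\<forall>\<xi> \<in> homs G R. \<forall>v \<in> verts G. Gamma G (\<rho> \<xi>) v = Gamma G \<xi> v)"
    using rho_hom[OF G] rho_inj[OF G] Gamma_rho[OF G] by blast
qed

end

theorem corollary7:
  fixes R :: "'a digraph" and X M Y :: "'a set" and \<beta> :: "'a \<Rightarrow> 'a"
  assumes "is_poset R"
    and "X \<subseteq> verts R" and "M \<subseteq> verts R" and "X \<inter> M = {}"
    and "Y \<subseteq> verts R" and "M \<inter> Y = {}" and "\<forall>y \<in> Y. M \<inter> nbrs R y = {}"
    and "bij_betw \<beta> X Y"
    and "\<forall>x1 \<in> X. \<forall>x2 \<in> X. (x1, x2) \<in> arcs (induced R X) \<longrightarrow> (\<beta> x1, \<beta> x2) \<in> arcs (induced R Y)"
    and "\<forall>x \<in> X. nbrs_in R x - M \<subseteq> nbrs_in R (\<beta> x)"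
    and "\<forall>x \<in> X. nbrs_out R x - M \<subseteq> nbrs_out R (\<beta> x)"
    and "convex R X"
    and "\<not> (\<exists>p. walk_from_to R M Y p)"
    and "\<not> (\<exists>p. walk_from_to R Y M p)"
  shows "is_poset (transitive_hull (rearr R X M \<beta>)) \<and>
         gamma_below R (transitive_hull (rearr R X M \<beta>))"
proof -
  interpret rearrangement R X M Y \<beta>
    using assms by unfold_locales auto
  show ?thesis
    using is_poset_T gamma_below_T by blast
qed

end
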